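(* Let $R$ be a ring. Then $R$ is D-regularly nil clean if, and only if, the quotient ring $R/J(R)$ is D-regularly nil clean and the Jacobson radical $J(R)$ is a nil ideal.
   Context: All rings are associative with identity $1\neq 0$. $Id(R)$ denotes the set of idempotents of $R$, $Nil(R)$ the set of nilpotent elements, $J(R)$ the Jacobson radical. A ring $R$ is called D-regularly nil clean if for each $a\in R$ there exists an idempotent $e\in aRa\cap Id(R)$ such that $a(1-e)\in Nil(R)$. *)

theory Defs
  imports "HOL-Algebra.QuotRing"
begin

definition idems :: "('a, 'b) ring_scheme \<Rightarrow> 'a set" where
  "idems S = {e \<in> carrier S. e \<otimes>\<^bsub>S\<^esub> e = e}"

definition nilps :: "('a, 'b) ring_scheme \<Rightarrow> 'a set" where
  "nilps S = {x \<in> carrier S. \<exists>n::nat. x [^]\<^bsub>S\<^esub> n = \<zero>\<^bsub>S\<^esub>}"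

definition left_ideal :: "('a, 'b) ring_scheme \<Rightarrow> 'a set \<Rightarrow> bool" where
  "left_ideal S I \<longleftrightarrow> additive_subgroup I S \<and>
     (\<forall>a\<in>carrier S. \<forall>x\<in>I. a \<otimes>\<^bsub>S\<^esub> x \<in> I)"

definition maximal_left_ideal :: "('a, 'b) ring_scheme \<Rightarrow> 'a set \<Rightarrow> bool" where
  "maximal_left_ideal S I \<longleftrightarrow> left_ideal S I \<and> I \<noteq> carrier S \<and>
     (\<forall>K. left_ideal S K \<and> I \<subseteq> K \<longrightarrow> K = I \<or> K = carrier S)"

definition jacobson :: "('a, 'b) ring_scheme \<Rightarrow> 'a set" where
  "jacobson S = carrier S \<inter> \<Inter> {I. maximal_left_ideal S I}"

definition D_regularly_nil_clean :: "('a, 'b) ring_scheme \<Rightarrow> bool" where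
  "D_regularly_nil_clean S \<longleftrightarrow>
     (\<forall>a\<in>carrier S. \<exists>e \<in> {a \<otimes>\<^bsub>S\<^esub> r \<otimes>\<^bsub>S\<^esub> a | r. r \<in> carrier S} \<inter> idems S.
        a \<otimes>\<^bsub>S\<^esub> (\<one>\<^bsub>S\<^esub> \<ominus>\<^bsub>S\<^esub> e) \<in> nilps S)"

definition nil_ideal :: "('a, 'b) ring_scheme \<Rightarrow> 'a set \<Rightarrow> bool" where
  "nil_ideal S I \<longleftrightarrow> I \<subseteq> nilps S"

end

theory Submission
  imports Defs "HOL-Algebra.Subrings"
begin

text \<open>If \<open>J(R)\<close> is nil, lifting goes through: an idempotent \<open>E\<close> of \<open>aRa\<close> modulo \<open>J(R)\<close> is
  represented by some \<open>b = ara\<close> with \<open>b\<^sup>2 - b\<close> nilpotent, and the iteration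
  \<open>b \<mapsto> b(3 - 2b)b\<close>, which stays inside \<open>aRa\<close>, turns the defect \<open>x = b\<^sup>2 - b\<close> into
  \<open>x\<^sup>2(4x - 3)\<close>, which lowers its nilpotency index until an honest idempotent \<open>f\<close> is
  reached; then \<open>a(1 - f)\<close> is nilpotent modulo the nil ideal \<open>J(R)\<close>, hence nilpotent.
  Conversely, D-regular nil cleanness passes to every quotient, and for \<open>a \<in> J(R)\<close> the
  idempotent \<open>e \<in> aRa \<subseteq> J(R)\<close> must vanish because \<open>1 - e\<close> is left invertible, so
  \<open>a = a(1 - e)\<close> is nilpotent.\<close>

context ring begin

lemma left_idealI:
  assumes "K \<subseteq> carrier R" "\<zero> \<in> K"
    and "\<And>a b. a \<in> K \<Longrightarrow> b \<in> K \<Longrightarrow> a \<oplus> b \<in> K"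
    and "\<And>a. a \<in> K \<Longrightarrow> \<ominus> a \<in> K"
    and "\<And>r a. r \<in> carrier R \<Longrightarrow> a \<in> K \<Longrightarrow> r \<otimes> a \<in> K"
  shows "left_ideal R K"
  unfolding left_ideal_def
proof (intro conjI ballI)
  show "additive_subgroup K R"
    by (rule additive_subgroupI, rule add.subgroupI) (use assms in \<open>auto simp: a_inv_def\<close>)
qed (use assms in auto)

lemma left_idealD:
  assumes "left_ideal R K"
  shows "K \<subseteq> carrier R" and "\<zero> \<in> K"
    and "\<And>a b. a \<in> K \<Longrightarrow> b \<in> K \<Longrightarrow> a \<oplus> b \<in> K"
    and "\<And>a. a \<in> K \<Longrightarrow> \<ominus> a \<in> K"
    and "\<And>r a. r \<in> carrier R \<Longrightarrow> a \<in> K \<Longrightarrow> r \<otimes> a \<in> K"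
  using assms unfolding left_ideal_def
  by (auto simp: additive_subgroup.a_subset additive_subgroup.a_closed
      additive_subgroup.zero_closed additive_subgroup.a_inv_closed)

lemma left_ideal_one_imp_carrier:
  assumes "left_ideal R K" and "\<one> \<in> K"
  shows "K = carrier R"
  using left_idealD(1,5)[OF assms(1)] assms(2) by (metis r_one subsetI subset_antisym)

lemma left_ideal_zero: "left_ideal R {\<zero>}"
  by (rule left_idealI) auto

lemma left_ideal_add_multiples:
  assumes M: "left_ideal R M" and y: "y \<in> carrier R"
  shows "left_ideal R {m \<oplus> t \<otimes> y | m t. m \<in> M \<and> t \<in> carrier R}"
proof -
  note M' = left_idealD[OF M]
  show ?thesis
  proof (rule left_idealI)
    show "\<zero> \<in> {m \<oplus> t \<otimes> y | m t. m \<in> M \<and> t \<in> carrier R}"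
      using M' y by (force intro: exI[of _ \<zero>])
  next
    fix a b
    assume "a \<in> {m \<oplus> t \<otimes> y | m t. m \<in> M \<and> t \<in> carrier R}"
      and "b \<in> {m \<oplus> t \<otimes> y | m t. m \<in> M \<and> t \<in> carrier R}"
    then obtain m1 t1 m2 t2 where "a = m1 \<oplus> t1 \<otimes> y" "b = m2 \<oplus> t2 \<otimes> y"
      and "m1 \<in> M" "m2 \<in> M" "t1 \<in> carrier R" "t2 \<in> carrier R" by blast
    moreover have "m1 \<oplus> t1 \<otimes> y \<oplus> (m2 \<oplus> t2 \<otimes> y) = (m1 \<oplus> m2) \<oplus> (t1 \<oplus> t2) \<otimes> y"
      using calculation M'(1) y by (simp add: l_distr a_ac subset_iff)
    ultimately show "a \<oplus> b \<in> {m \<oplus> t \<otimes> y | m t. m \<in> M \<and> t \<in> carrier R}"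
      using M'(3) by blast
  next
    fix a assume "a \<in> {m \<oplus> t \<otimes> y | m t. m \<in> M \<and> t \<in> carrier R}"
    then obtain m t where "a = m \<oplus> t \<otimes> y" "m \<in> M" "t \<in> carrier R" by blast
    moreover have "\<ominus> (m \<oplus> t \<otimes> y) = \<ominus> m \<oplus> (\<ominus> t) \<otimes> y"
      using calculation M'(1) y by (simp add: l_minus minus_add subset_iff)
    ultimately show "\<ominus> a \<in> {m \<oplus> t \<otimes> y | m t. m \<in> M \<and> t \<in> carrier R}"
      using M'(4) by blast
  next
    fix r a assume r: "r \<in> carrier R"
      and "a \<in> {m \<oplus> t \<otimes> y | m t. m \<in> M \<and> t \<in> carrier R}"
    then obtain m t where "a = m \<oplus> t \<otimes> y" "m \<in> M" "t \<in> carrier R" by blast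
    moreover have "r \<otimes> (m \<oplus> t \<otimes> y) = r \<otimes> m \<oplus> (r \<otimes> t) \<otimes> y"
      using calculation M'(1) r y by (simp add: r_distr m_assoc subset_iff)
    ultimately show "r \<otimes> a \<in> {m \<oplus> t \<otimes> y | m t. m \<in> M \<and> t \<in> carrier R}"
      using M'(5) r by blast
  qed (use M' y in auto)
qed

lemma left_ideal_Union_chain:
  assumes "C \<in> chains {K. left_ideal R K}" and "C \<noteq> {}"
  shows "left_ideal R (\<Union>C)"
proof -
  have ideals: "\<And>K. K \<in> C \<Longrightarrow> left_ideal R K"
    using chainsD2[OF assms(1)] by blast
  show ?thesis
  proof (rule left_idealI)
    show "\<Union>C \<subseteq> carrier R" using ideals left_idealD(1) by blast
    show "\<zero> \<in> \<Union>C" using assms(2) ideals left_idealD(2) by blast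
    show "\<ominus> a \<in> \<Union>C" if "a \<in> \<Union>C" for a
      using that ideals left_idealD(4) by blast
    show "r \<otimes> a \<in> \<Union>C" if "r \<in> carrier R" "a \<in> \<Union>C" for r a
      using that ideals left_idealD(5) by blast
    fix a b assume "a \<in> \<Union>C" "b \<in> \<Union>C"
    then obtain K L where KL: "K \<in> C" "L \<in> C" "a \<in> K" "b \<in> L" by blast
    then consider "K \<subseteq> L" | "L \<subseteq> K" using chainsD[OF assms(1)] by blast
    then show "a \<oplus> b \<in> \<Union>C"
      by cases (use KL ideals left_idealD(3) in blast)+
  qed
qed

lemma exists_maximal_left_ideal:
  assumes "left_ideal R I" and "\<one> \<notin> I"
  shows "\<exists>M. maximal_left_ideal R M \<and> I \<subseteq> M"
proof -
  let ?P = "{K. left_ideal R K \<and> I \<subseteq> K \<and> \<one> \<notin> K}"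
  have "\<exists>U\<in>?P. \<forall>K\<in>C. K \<subseteq> U" if C: "C \<in> chains ?P" for C
  proof (cases "C = {}")
    case True
    have "I \<in> ?P" using assms by blast
    with True show ?thesis by blast
  next
    case False
    have "C \<in> chains {K. left_ideal R K}"
      using C by (auto simp: chains_def)
    then have "left_ideal R (\<Union>C)"
      using False by (rule left_ideal_Union_chain)
    moreover have "I \<subseteq> \<Union>C" "\<one> \<notin> \<Union>C"
      using False chainsD2[OF C] by blast+
    ultimately show ?thesis by blast
  qed
  then obtain M where M: "M \<in> ?P" and max: "\<And>K. K \<in> ?P \<Longrightarrow> M \<subseteq> K \<Longrightarrow> K = M"
    using Zorn_Lemma2[of ?P] by meson
  have "maximal_left_ideal R M"
    unfolding maximal_left_ideal_def
  proof (intro conjI allI impI)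
    show "left_ideal R M" using M by blast
    show "M \<noteq> carrier R" using M by blast
    fix K assume K: "left_ideal R K \<and> M \<subseteq> K"
    show "K = M \<or> K = carrier R"
    proof (cases "\<one> \<in> K")
      case True
      then show ?thesis using K left_ideal_one_imp_carrier by blast
    next
      case False
      then show ?thesis using K M max[of K] by blast
    qed
  qed
  with M show ?thesis by blast
qed

lemma left_ideal_jacobson: "left_ideal R (jacobson R)"
proof -
  have ideals: "\<And>M. maximal_left_ideal R M \<Longrightarrow> left_ideal R M"
    unfolding maximal_left_ideal_def by blast
  show ?thesis
  proof (rule left_idealI)
    show "jacobson R \<subseteq> carrier R" unfolding jacobson_def by blast
    show "\<zero> \<in> jacobson R"
      unfolding jacobson_def using ideals left_idealD(2) by blast
    show "a \<oplus> b \<in> jacobson R" if "a \<in> jacobson R" "b \<in> jacobson R" for a b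
      using that ideals left_idealD(3) unfolding jacobson_def by blast
    show "\<ominus> a \<in> jacobson R" if "a \<in> jacobson R" for a
      using that ideals left_idealD(4) unfolding jacobson_def by blast
    show "r \<otimes> a \<in> jacobson R" if "r \<in> carrier R" "a \<in> jacobson R" for r a
      using that ideals left_idealD(5) unfolding jacobson_def by blast
  qed
qed

lemma jacobson_imp_left_invertible:
  assumes x: "x \<in> jacobson R" and r: "r \<in> carrier R"
  shows "\<exists>u\<in>carrier R. u \<otimes> (\<one> \<ominus> r \<otimes> x) = \<one>"
proof (rule ccontr)
  assume no_inverse: "\<not> ?thesis"
  have xc: "x \<in> carrier R" using x unfolding jacobson_def by blast
  let ?L = "{m \<oplus> t \<otimes> (\<one> \<ominus> r \<otimes> x) | m t. m \<in> {\<zero>} \<and> t \<in> carrier R}"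
  have "\<one> \<notin> ?L"
  proof
    assume "\<one> \<in> ?L"
    then obtain t where t: "t \<in> carrier R" "\<one> = \<zero> \<oplus> t \<otimes> (\<one> \<ominus> r \<otimes> x)" by blast
    then have "t \<otimes> (\<one> \<ominus> r \<otimes> x) = \<one>" using xc r by simp
    with t(1) no_inverse show False by blast
  qed
  moreover have "left_ideal R ?L"
    using left_ideal_add_multiples[OF left_ideal_zero] xc r by simp
  ultimately obtain M where M: "maximal_left_ideal R M" "?L \<subseteq> M"
    using exists_maximal_left_ideal by blast
  have ideal: "left_ideal R M" using M(1) unfolding maximal_left_ideal_def by blast
  have "\<one> \<ominus> r \<otimes> x = \<zero> \<oplus> \<one> \<otimes> (\<one> \<ominus> r \<otimes> x)" using xc r by simp
  then have "\<one> \<ominus> r \<otimes> x \<in> M" using M(2) by blast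
  moreover have "r \<otimes> x \<in> M"
    using x M(1) left_idealD(5)[OF ideal r] unfolding jacobson_def by blast
  ultimately have "(\<one> \<ominus> r \<otimes> x) \<oplus> r \<otimes> x \<in> M"
    using left_idealD(3)[OF ideal] by blast
  then have "\<one> \<in> M" using xc r by (simp add: minus_eq a_assoc l_neg)
  then show False
    using M(1) left_ideal_one_imp_carrier[OF ideal] unfolding maximal_left_ideal_def by blast
qed

lemma left_invertible_imp_jacobson:
  assumes x: "x \<in> carrier R"
    and inv: "\<And>r. r \<in> carrier R \<Longrightarrow> \<exists>u\<in>carrier R. u \<otimes> (\<one> \<ominus> r \<otimes> x) = \<one>"
  shows "x \<in> jacobson R"
proof -
  have "x \<in> M" if M: "maximal_left_ideal R M" for M
  proof (rule ccontr)
    assume xM: "x \<notin> M"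
    have ideal: "left_ideal R M" using M unfolding maximal_left_ideal_def by blast
    let ?N = "{m \<oplus> t \<otimes> x | m t. m \<in> M \<and> t \<in> carrier R}"
    have "M \<subseteq> ?N"
    proof
      fix m assume "m \<in> M"
      moreover from this have "m = m \<oplus> \<zero> \<otimes> x" using x left_idealD(1)[OF ideal] by auto
      ultimately show "m \<in> ?N" by blast
    qed
    moreover have "x \<in> ?N"
    proof -
      have "x = \<zero> \<oplus> \<one> \<otimes> x" using x by simp
      then show ?thesis using left_idealD(2)[OF ideal] by blast
    qed
    ultimately have "?N = carrier R"
      using M xM left_ideal_add_multiples[OF ideal x]
      unfolding maximal_left_ideal_def by blast
    then have "\<one> \<in> ?N" by simp
    then obtain m t where mt: "\<one> = m \<oplus> t \<otimes> x" "m \<in> M" "t \<in> carrier R" by blast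
    have "m \<in> carrier R" using mt(2) left_idealD(1)[OF ideal] by blast
    then have "\<one> \<ominus> t \<otimes> x = m"
      unfolding mt(1) using mt(3) x by (simp add: minus_eq a_assoc r_neg)
    moreover obtain u where "u \<in> carrier R" "u \<otimes> (\<one> \<ominus> t \<otimes> x) = \<one>"
      using inv[OF mt(3)] by blast
    ultimately have "\<one> \<in> M" using left_idealD(5)[OF ideal _ mt(2)] by metis
    then show False
      using M left_ideal_one_imp_carrier[OF ideal] unfolding maximal_left_ideal_def by blast
  qed
  with x show ?thesis unfolding jacobson_def by blast
qed

lemma one_minus_swap_left_invertible:
  assumes a: "a \<in> carrier R" and b: "b \<in> carrier R" and u: "u \<in> carrier R"
    and inv: "u \<otimes> (\<one> \<ominus> a \<otimes> b) = \<one>"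
  shows "(\<one> \<oplus> b \<otimes> u \<otimes> a) \<otimes> (\<one> \<ominus> b \<otimes> a) = \<one>"
proof -
  have "a \<otimes> (\<one> \<ominus> b \<otimes> a) = (\<one> \<ominus> a \<otimes> b) \<otimes> a"
    using a b by (simp add: minus_eq r_distr l_distr r_minus l_minus m_assoc)
  then have "b \<otimes> u \<otimes> a \<otimes> (\<one> \<ominus> b \<otimes> a) = b \<otimes> (u \<otimes> (\<one> \<ominus> a \<otimes> b)) \<otimes> a"
    using a b u by (simp add: m_assoc)
  also have "\<dots> = b \<otimes> a" using a b by (simp add: inv)
  finally have "b \<otimes> u \<otimes> a \<otimes> (\<one> \<ominus> b \<otimes> a) = b \<otimes> a" .
  then show ?thesis
    using a b u by (simp add: l_distr minus_eq a_assoc l_neg)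
qed

lemma jacobson_r_closed:
  assumes x: "x \<in> jacobson R" and s: "s \<in> carrier R"
  shows "x \<otimes> s \<in> jacobson R"
proof (rule left_invertible_imp_jacobson)
  have xc: "x \<in> carrier R" using x unfolding jacobson_def by blast
  then show "x \<otimes> s \<in> carrier R" using s by simp
  fix r assume r: "r \<in> carrier R"
  have "s \<otimes> r \<in> carrier R" using s r by simp
  then obtain u where u: "u \<in> carrier R" "u \<otimes> (\<one> \<ominus> s \<otimes> r \<otimes> x) = \<one>"
    using jacobson_imp_left_invertible[OF x] by blast
  then have "u \<otimes> (\<one> \<ominus> s \<otimes> (r \<otimes> x)) = \<one>" using xc s r by (simp add: m_assoc)
  then have "(\<one> \<oplus> (r \<otimes> x) \<otimes> u \<otimes> s) \<otimes> (\<one> \<ominus> (r \<otimes> x) \<otimes> s) = \<one>"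
    using one_minus_swap_left_invertible[OF s _ u(1)] xc r by simp
  then have "(\<one> \<oplus> r \<otimes> x \<otimes> u \<otimes> s) \<otimes> (\<one> \<ominus> r \<otimes> (x \<otimes> s)) = \<one>"
    using xc r s by (simp add: m_assoc)
  moreover have "\<one> \<oplus> r \<otimes> x \<otimes> u \<otimes> s \<in> carrier R" using xc r s u(1) by simp
  ultimately show "\<exists>v\<in>carrier R. v \<otimes> (\<one> \<ominus> r \<otimes> (x \<otimes> s)) = \<one>" by blast
qed

lemma ideal_jacobson: "ideal (jacobson R) R"
proof (rule idealI)
  show "ring R" ..
  show "subgroup (jacobson R) (add_monoid R)"
    using left_ideal_jacobson unfolding left_ideal_def additive_subgroup_def by blast
  show "x \<otimes> a \<in> jacobson R" if "a \<in> jacobson R" "x \<in> carrier R" for a x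
    using left_idealD(5)[OF left_ideal_jacobson] that by blast
  show "a \<otimes> x \<in> jacobson R" if "a \<in> jacobson R" "x \<in> carrier R" for a x
    using jacobson_r_closed that by blast
qed

lemma idempotent_in_jacobson_eq_zero:
  assumes e: "e \<in> jacobson R" and idem: "e \<otimes> e = e"
  shows "e = \<zero>"
proof -
  have ec: "e \<in> carrier R" using e unfolding jacobson_def by blast
  obtain u where u: "u \<in> carrier R" "u \<otimes> (\<one> \<ominus> \<one> \<otimes> e) = \<one>"
    using jacobson_imp_left_invertible[OF e] by blast
  have "e = u \<otimes> (\<one> \<ominus> e) \<otimes> e" using u ec by simp
  also have "\<dots> = u \<otimes> (e \<ominus> e \<otimes> e)"
    using u(1) ec by (simp add: m_assoc minus_eq l_distr r_distr l_minus)
  also have "\<dots> = \<zero>" using u(1) ec by (simp add: idem minus_eq r_neg)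
  finally show ?thesis .
qed

end

lemma (in cring) idempotent_refinement_identities_comm:
  assumes b: "b \<in> carrier R"
  defines "x \<equiv> b \<otimes> b \<ominus> b" and "w \<equiv> \<one> \<ominus> (b \<oplus> b)"
  defines "g \<equiv> b \<otimes> (\<one> \<oplus> \<one> \<oplus> \<one> \<ominus> (b \<oplus> b)) \<otimes> b"
  shows "g \<ominus> b = x \<otimes> w"
    and "g \<otimes> g \<ominus> g = x \<otimes> x \<otimes> (x \<oplus> x \<oplus> x \<oplus> x \<ominus> (\<one> \<oplus> \<one> \<oplus> \<one>))"
proof -
  have x: "x \<in> carrier R" and w: "w \<in> carrier R" using b by (simp_all add: x_def w_def)
  have g: "g = b \<oplus> x \<otimes> w" unfolding g_def x_def w_def using b by algebra
  then show "g \<ominus> b = x \<otimes> w" using b x w by algebra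
  have "g \<otimes> g \<ominus> g = (b \<otimes> b \<ominus> b) \<oplus> x \<otimes> (w \<otimes> (b \<oplus> b \<ominus> \<one>)) \<oplus> x \<otimes> x \<otimes> (w \<otimes> w)"
    unfolding g using b x w by algebra
  also have "w \<otimes> (b \<oplus> b \<ominus> \<one>) = \<ominus> (w \<otimes> w)" unfolding w_def using b by algebra
  also have "w \<otimes> w = \<one> \<oplus> (x \<oplus> x \<oplus> x \<oplus> x)" unfolding x_def w_def using b by algebra
  finally show "g \<otimes> g \<ominus> g = x \<otimes> x \<otimes> (x \<oplus> x \<oplus> x \<oplus> x \<ominus> (\<one> \<oplus> \<one> \<oplus> \<one>))"
    unfolding x_def[symmetric] using x by algebra
qed

definition commutant :: "('a, 'b) ring_scheme \<Rightarrow> 'a set \<Rightarrow> 'a set" where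
  "commutant R S = {y \<in> carrier R. \<forall>z\<in>S. y \<otimes>\<^bsub>R\<^esub> z = z \<otimes>\<^bsub>R\<^esub> y}"

lemma commutant_antimono: "S \<subseteq> T \<Longrightarrow> commutant R T \<subseteq> commutant R S"
  unfolding commutant_def by blast

context ring begin

lemma subring_commutant:
  assumes "S \<subseteq> carrier R"
  shows "subring (commutant R S) R"
proof (rule subringI)
  show "commutant R S \<subseteq> carrier R" unfolding commutant_def by blast
  show "\<one> \<in> commutant R S" using assms unfolding commutant_def by auto
  show "\<ominus> h \<in> commutant R S" if "h \<in> commutant R S" for h
    using that assms unfolding commutant_def by (auto simp: l_minus r_minus subset_iff)
  show "h1 \<otimes> h2 \<in> commutant R S" if "h1 \<in> commutant R S" "h2 \<in> commutant R S" for h1 h2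
    using that assms unfolding commutant_def by (auto simp: subset_iff) (metis m_assoc)
  show "h1 \<oplus> h2 \<in> commutant R S" if "h1 \<in> commutant R S" "h2 \<in> commutant R S" for h1 h2
    using that assms unfolding commutant_def by (auto simp: l_distr r_distr subset_iff)
qed

lemma subset_bicommutant:
  assumes "S \<subseteq> carrier R"
  shows "S \<subseteq> commutant R (commutant R S)"
  using assms unfolding commutant_def by auto

lemma subcring_bicommutant:
  assumes S: "S \<subseteq> carrier R" and comm: "\<And>x y. x \<in> S \<Longrightarrow> y \<in> S \<Longrightarrow> x \<otimes> y = y \<otimes> x"
  shows "subcring (commutant R (commutant R S)) R"
proof (rule subcringI)
  show "subring (commutant R (commutant R S)) R"
    by (rule subring_commutant) (auto simp: commutant_def)
  have "S \<subseteq> commutant R S" using S comm unfolding commutant_def by blast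
  then have "commutant R (commutant R S) \<subseteq> commutant R S" by (rule commutant_antimono)
  then show "x \<otimes> y = y \<otimes> x"
    if "x \<in> commutant R (commutant R S)" "y \<in> commutant R (commutant R S)" for x y
    using that unfolding commutant_def by blast
qed

lemma subring_a_minus:
  assumes H: "subring H R" and x: "x \<in> H" and y: "y \<in> H"
  shows "x \<ominus>\<^bsub>R\<lparr>carrier := H\<rparr>\<^esub> y = x \<ominus> y"
proof -
  interpret S: ring "R\<lparr>carrier := H\<rparr>" using subring_is_ring[OF H] .
  have inv: "\<ominus>\<^bsub>R\<lparr>carrier := H\<rparr>\<^esub> y = \<ominus> y"
  proof (rule minus_equality[symmetric])
    show "\<ominus>\<^bsub>R\<lparr>carrier := H\<rparr>\<^esub> y \<oplus> y = \<zero>" using S.l_neg y by simp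
  qed (use S.a_inv_closed y subringE(1)[OF H] in auto)
  show ?thesis by (simp add: a_minus_def inv)
qed

text \<open>The identities only involve polynomials in \<open>b\<close>, so they can be checked in the
  commutative bicommutant of \<open>{b}\<close>.\<close>
lemma idempotent_refinement_identities:
  assumes b: "b \<in> carrier R"
  defines "x \<equiv> b \<otimes> b \<ominus> b" and "w \<equiv> \<one> \<ominus> (b \<oplus> b)"
  defines "g \<equiv> b \<otimes> (\<one> \<oplus> \<one> \<oplus> \<one> \<ominus> (b \<oplus> b)) \<otimes> b"
  shows "g \<ominus> b = x \<otimes> w"
    and "g \<otimes> g \<ominus> g = x \<otimes> x \<otimes> (x \<oplus> x \<oplus> x \<oplus> x \<ominus> (\<one> \<oplus> \<one> \<oplus> \<one>))"
proof -
  let ?C = "commutant R (commutant R {b})"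
  have C: "subcring ?C R" by (rule subcring_bicommutant) (use b in auto)
  then have sub: "subring ?C R" by (rule subcring.axioms(1))
  interpret S: cring "R\<lparr>carrier := ?C\<rparr>"
    using C subcring_iff subringE(1)[OF sub] by blast
  have bC: "b \<in> ?C" using subset_bicommutant b by blast
  have minus_closed: "h1 \<ominus> h2 \<in> ?C" if "h1 \<in> ?C" "h2 \<in> ?C" for h1 h2
    using that subringE(5,7)[OF sub] by (simp add: a_minus_def)
  note closed = subringE(3,5-7)[OF sub] minus_closed subring_a_minus[OF sub]
  show "g \<ominus> b = x \<otimes> w"
    using S.idempotent_refinement_identities_comm(1)[of b] bC
    unfolding g_def x_def w_def by (simp add: closed)
  show "g \<otimes> g \<ominus> g = x \<otimes> x \<otimes> (x \<oplus> x \<oplus> x \<oplus> x \<ominus> (\<one> \<oplus> \<one> \<oplus> \<one>))"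
    using S.idempotent_refinement_identities_comm(2)[of b] bC
    unfolding g_def x_def w_def by (simp add: closed)
qed

lemma nilpotent_square_times_commuting:
  assumes x: "x \<in> carrier R" and y: "y \<in> carrier R" and comm: "x \<otimes> y = y \<otimes> x"
    and nil: "x [^] Suc k = \<zero>" and k: "0 < k"
  shows "(x \<otimes> x \<otimes> y) [^] k = \<zero>"
proof -
  have "x \<otimes> x \<otimes> y = x \<otimes> (y \<otimes> x)" using x y by (simp add: m_assoc comm)
  also have "\<dots> = y \<otimes> (x \<otimes> x)" using x y by (simp add: comm flip: m_assoc)
  finally have "(x \<otimes> x \<otimes> y) [^] k = (x \<otimes> x) [^] k \<otimes> y [^] k"
    by (rule pow_mult_distrib[OF _ m_closed[OF x x] y])
  also have "(x \<otimes> x) [^] k = x [^] (k + k)"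
    using x by (simp add: pow_mult_distrib nat_pow_mult)
  also have "x [^] (k + k) = x [^] Suc k \<otimes> x [^] (k - 1)"
    using x k nat_pow_mult[OF x, of "Suc k" "k - 1"] by simp
  finally show ?thesis using x y nil by simp
qed

lemma nilps_if_pow_nilps:
  assumes x: "x \<in> carrier R" and "x [^] (n::nat) \<in> nilps R"
  shows "x \<in> nilps R"
proof -
  obtain m :: nat where "(x [^] n) [^] m = \<zero>" using assms(2) unfolding nilps_def by blast
  then have "x [^] (n * m) = \<zero>" using x by (simp add: nat_pow_pow)
  with x show ?thesis unfolding nilps_def by blast
qed

lemma idempotent_refinement_step:
  assumes I: "ideal I R" and a: "a \<in> carrier R" and s: "s \<in> carrier R"
    and b_def: "b = a \<otimes> s \<otimes> a" and defect: "b \<otimes> b \<ominus> b \<in> I"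
    and nil: "(b \<otimes> b \<ominus> b) [^] Suc k = \<zero>" and k: "0 < k"
  obtains g where "g \<in> {a \<otimes> r \<otimes> a | r. r \<in> carrier R}" and "g \<ominus> b \<in> I"
    and "g \<otimes> g \<ominus> g \<in> I" and "(g \<otimes> g \<ominus> g) [^] k = \<zero>"
proof -
  interpret I: ideal I R by (rule I)
  have b: "b \<in> carrier R" using a s by (simp add: b_def)
  define x where "x = b \<otimes> b \<ominus> b"
  define w where "w = \<one> \<ominus> (b \<oplus> b)"
  define v where "v = x \<oplus> x \<oplus> x \<oplus> x \<ominus> (\<one> \<oplus> \<one> \<oplus> \<one>)"
  define g where "g = b \<otimes> (\<one> \<oplus> \<one> \<oplus> \<one> \<ominus> (b \<oplus> b)) \<otimes> b"
  note identities = idempotent_refinement_identities[OF b, folded x_def w_def g_def, folded v_def]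
  have x: "x \<in> carrier R" and w: "w \<in> carrier R" and v: "v \<in> carrier R"
    using b by (simp_all add: x_def w_def v_def)
  have "g = a \<otimes> (s \<otimes> a \<otimes> (\<one> \<oplus> \<one> \<oplus> \<one> \<ominus> (b \<oplus> b)) \<otimes> a \<otimes> s) \<otimes> a"
    using a s b by (simp add: g_def b_def m_assoc)
  then have "g \<in> {a \<otimes> r \<otimes> a | r. r \<in> carrier R}"
    using a s b by fastforce
  moreover have xI: "x \<in> I" using defect by (simp add: x_def)
  then have "g \<ominus> b \<in> I" using identities(1) I.I_r_closed[OF xI w] by simp
  moreover have "g \<otimes> g \<ominus> g \<in> I"
    using identities(2) I.I_r_closed[OF I.I_r_closed[OF xI x] v] by simp
  moreover have "x \<otimes> v = v \<otimes> x"
    using x by (simp add: v_def minus_eq r_distr l_distr r_minus l_minus)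
  then have "(g \<otimes> g \<ominus> g) [^] k = \<zero>"
    using nilpotent_square_times_commuting[OF x v _ _ k] nil by (simp add: identities(2) x_def)
  ultimately show ?thesis using that by blast
qed

lemma lift_idempotent_in_corner_nilpotent:
  assumes I: "ideal I R" and a: "a \<in> carrier R"
  shows "b \<in> {a \<otimes> r \<otimes> a | r. r \<in> carrier R} \<Longrightarrow> b \<otimes> b \<ominus> b \<in> I \<Longrightarrow>
    (b \<otimes> b \<ominus> b) [^] Suc k = \<zero> \<Longrightarrow>
    \<exists>f \<in> {a \<otimes> r \<otimes> a | r. r \<in> carrier R}. f \<otimes> f = f \<and> f \<ominus> b \<in> I"
proof (induction k arbitrary: b rule: less_induct)
  case (less k b)
  interpret I: ideal I R by (rule I)
  obtain s where s: "s \<in> carrier R" "b = a \<otimes> s \<otimes> a" using less.prems(1) by blast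
  have b: "b \<in> carrier R" using s a by simp
  show ?case
  proof (cases "k = 0")
    case True
    then have "b \<otimes> b = b" using less.prems(3) b by simp
    moreover have "b \<ominus> b \<in> I" using b by (simp add: minus_eq r_neg)
    ultimately show ?thesis using less.prems(1) by blast
  next
    case False
    then obtain g where g: "g \<in> {a \<otimes> r \<otimes> a | r. r \<in> carrier R}" "g \<ominus> b \<in> I"
      "g \<otimes> g \<ominus> g \<in> I" "(g \<otimes> g \<ominus> g) [^] Suc (k - 1) = \<zero>"
      using idempotent_refinement_step[OF I a s less.prems(2,3)] by auto
    then obtain f where f: "f \<in> {a \<otimes> r \<otimes> a | r. r \<in> carrier R}" "f \<otimes> f = f" "f \<ominus> g \<in> I"
      using less.IH[of "k - 1" g] False by auto
    have "f \<in> carrier R" "g \<in> carrier R" using f(1) g(1) a by auto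
    then have "f \<ominus> b = (f \<ominus> g) \<oplus> (g \<ominus> b)"
      using b by (simp add: minus_eq a_assoc r_neg1)
    then have "f \<ominus> b \<in> I" using f(3) g(2) by simp
    with f show ?thesis by blast
  qed
qed

lemma lift_idempotent_in_corner:
  assumes "ideal I R" and "I \<subseteq> nilps R" and "a \<in> carrier R"
    and "b \<in> {a \<otimes> r \<otimes> a | r. r \<in> carrier R}" and "b \<otimes> b \<ominus> b \<in> I"
  shows "\<exists>f \<in> {a \<otimes> r \<otimes> a | r. r \<in> carrier R}. f \<otimes> f = f \<and> f \<ominus> b \<in> I"
proof -
  obtain n :: nat where n: "(b \<otimes> b \<ominus> b) [^] n = \<zero>" using assms(2,5) unfolding nilps_def by blast
  have "b \<otimes> b \<ominus> b \<in> carrier R" using assms(2,5) unfolding nilps_def by blast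
  then have "(b \<otimes> b \<ominus> b) [^] Suc n = \<zero>" using n by simp
  then show ?thesis using lift_idempotent_in_corner_nilpotent assms(1,3-5) by blast
qed

end

context ideal begin

lemma FactRing_carrier_rep:
  assumes "X \<in> carrier (R Quot I)"
  obtains x where "x \<in> carrier R" and "X = I +> x"
  using assms by (auto simp: FactRing_def A_RCOSETS_def')

lemma rcos_eq_zero_iff:
  assumes "x \<in> carrier R"
  shows "I +> x = \<zero>\<^bsub>R Quot I\<^esub> \<longleftrightarrow> x \<in> I"
  using rcos_const_imp_mem[OF assms] a_rcos_zero[OF ideal_axioms]
  by (auto simp: FactRing_def)

lemma rcos_eq_iff:
  assumes x: "x \<in> carrier R" and y: "y \<in> carrier R"
  shows "I +> x = I +> y \<longleftrightarrow> x \<ominus> y \<in> I"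
proof -
  interpret H: ring_hom_ring R "R Quot I" "(+>) I" by (rule rcos_ring_hom_ring)
  have "I +> (x \<ominus> y) = (I +> x) \<ominus>\<^bsub>R Quot I\<^esub> (I +> y)"
    using x y by (simp add: minus_eq H.S.minus_eq)
  then show ?thesis
    using x y rcos_eq_zero_iff[of "x \<ominus> y"] by simp
qed

lemma rcos_idempotent_iff:
  assumes x: "x \<in> carrier R"
  shows "I +> x \<in> idems (R Quot I) \<longleftrightarrow> x \<otimes> x \<ominus> x \<in> I"
proof -
  interpret H: ring_hom_ring R "R Quot I" "(+>) I" by (rule rcos_ring_hom_ring)
  show ?thesis
    using x rcos_eq_iff[of "x \<otimes> x" x] unfolding idems_def by (simp flip: H.hom_mult)
qed

lemma rcos_nilpotent_iff:
  assumes x: "x \<in> carrier R"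
  shows "I +> x \<in> nilps (R Quot I) \<longleftrightarrow> (\<exists>n::nat. x [^] n \<in> I)"
proof -
  interpret H: ring_hom_ring R "R Quot I" "(+>) I" by (rule rcos_ring_hom_ring)
  show ?thesis
    using x rcos_eq_zero_iff unfolding nilps_def by (simp flip: H.hom_nat_pow)
qed

lemma D_regularly_nil_clean_quotient:
  assumes D: "D_regularly_nil_clean R"
  shows "D_regularly_nil_clean (R Quot I)"
  unfolding D_regularly_nil_clean_def
proof
  interpret H: ring_hom_ring R "R Quot I" "(+>) I" by (rule rcos_ring_hom_ring)
  fix X assume "X \<in> carrier (R Quot I)"
  then obtain a where a: "a \<in> carrier R" "X = I +> a" by (rule FactRing_carrier_rep)
  then obtain r where r: "r \<in> carrier R" and idem: "a \<otimes> r \<otimes> a \<in> idems R"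
    and nil: "a \<otimes> (\<one> \<ominus> a \<otimes> r \<otimes> a) \<in> nilps R"
    using D unfolding D_regularly_nil_clean_def by blast
  let ?e = "a \<otimes> r \<otimes> a"
  have e: "?e \<in> carrier R" using a r by simp
  have "I +> r \<in> carrier (R Quot I)" using r by simp
  moreover have "I +> ?e = X \<otimes>\<^bsub>R Quot I\<^esub> (I +> r) \<otimes>\<^bsub>R Quot I\<^esub> X"
    using a r by simp
  ultimately have corner: "I +> ?e \<in> {X \<otimes>\<^bsub>R Quot I\<^esub> Y \<otimes>\<^bsub>R Quot I\<^esub> X | Y. Y \<in> carrier (R Quot I)}"
    by blast
  have idem_quot: "I +> ?e \<in> idems (R Quot I)"
    using idem e rcos_idempotent_iff unfolding idems_def by (simp add: minus_eq r_neg)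
  have "X \<otimes>\<^bsub>R Quot I\<^esub> (\<one>\<^bsub>R Quot I\<^esub> \<ominus>\<^bsub>R Quot I\<^esub> (I +> ?e))
      = I +> (a \<otimes> (\<one> \<ominus> ?e))"
    using a e by (simp add: minus_eq H.S.minus_eq)
  moreover have "I +> (a \<otimes> (\<one> \<ominus> ?e)) \<in> nilps (R Quot I)"
  proof -
    obtain n :: nat where "(a \<otimes> (\<one> \<ominus> ?e)) [^] n = \<zero>" using nil unfolding nilps_def by blast
    then have "(a \<otimes> (\<one> \<ominus> ?e)) [^] n \<in> I" by simp
    then show ?thesis using a e rcos_nilpotent_iff[of "a \<otimes> (\<one> \<ominus> ?e)"] by auto
  qed
  ultimately have "X \<otimes>\<^bsub>R Quot I\<^esub> (\<one>\<^bsub>R Quot I\<^esub> \<ominus>\<^bsub>R Quot I\<^esub> (I +> ?e)) \<in> nilps (R Quot I)"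
    by simp
  with corner idem_quot show "\<exists>E \<in> {X \<otimes>\<^bsub>R Quot I\<^esub> Y \<otimes>\<^bsub>R Quot I\<^esub> X | Y. Y \<in> carrier (R Quot I)}
      \<inter> idems (R Quot I). X \<otimes>\<^bsub>R Quot I\<^esub> (\<one>\<^bsub>R Quot I\<^esub> \<ominus>\<^bsub>R Quot I\<^esub> E) \<in> nilps (R Quot I)"
    by blast
qed

lemma D_regularly_nil_clean_lift:
  assumes nil: "I \<subseteq> nilps R" and D: "D_regularly_nil_clean (R Quot I)"
  shows "D_regularly_nil_clean R"
  unfolding D_regularly_nil_clean_def
proof
  interpret H: ring_hom_ring R "R Quot I" "(+>) I" by (rule rcos_ring_hom_ring)
  fix a assume a: "a \<in> carrier R"
  then have "I +> a \<in> carrier (R Quot I)" by simp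
  then obtain Y where Y: "Y \<in> carrier (R Quot I)"
    and idem: "(I +> a) \<otimes>\<^bsub>R Quot I\<^esub> Y \<otimes>\<^bsub>R Quot I\<^esub> (I +> a) \<in> idems (R Quot I)"
    and nil_quot: "(I +> a) \<otimes>\<^bsub>R Quot I\<^esub>
      (\<one>\<^bsub>R Quot I\<^esub> \<ominus>\<^bsub>R Quot I\<^esub> (I +> a) \<otimes>\<^bsub>R Quot I\<^esub> Y \<otimes>\<^bsub>R Quot I\<^esub> (I +> a))
      \<in> nilps (R Quot I)"
    using D unfolding D_regularly_nil_clean_def by blast
  obtain r where r: "r \<in> carrier R" "Y = I +> r" using Y by (rule FactRing_carrier_rep)
  let ?b = "a \<otimes> r \<otimes> a"
  have b: "?b \<in> carrier R" using a r by simp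
  have E: "(I +> a) \<otimes>\<^bsub>R Quot I\<^esub> Y \<otimes>\<^bsub>R Quot I\<^esub> (I +> a) = I +> ?b"
    using a r by simp
  have "?b \<otimes> ?b \<ominus> ?b \<in> I" using idem b rcos_idempotent_iff by (simp add: E)
  then obtain f where f: "f \<in> {a \<otimes> s \<otimes> a | s. s \<in> carrier R}" "f \<otimes> f = f" "f \<ominus> ?b \<in> I"
    using lift_idempotent_in_corner[OF ideal_axioms nil a] r by blast
  have fc: "f \<in> carrier R" using f(1) a by auto
  have af: "a \<otimes> (\<one> \<ominus> f) \<in> carrier R" using a fc by simp
  have "I +> f = I +> ?b" using f(3) fc b rcos_eq_iff by blast
  then have "I +> (a \<otimes> (\<one> \<ominus> f)) \<in> nilps (R Quot I)"
    using nil_quot a fc by (simp add: E minus_eq H.S.minus_eq)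
  then obtain n :: nat where "(a \<otimes> (\<one> \<ominus> f)) [^] n \<in> I"
    using rcos_nilpotent_iff[OF af] by blast
  then have "a \<otimes> (\<one> \<ominus> f) \<in> nilps R"
    using nilps_if_pow_nilps[OF af] nil by blast
  moreover have "f \<in> idems R" using f(2) fc unfolding idems_def by blast
  ultimately show "\<exists>e \<in> {a \<otimes> s \<otimes> a | s. s \<in> carrier R} \<inter> idems R. a \<otimes> (\<one> \<ominus> e) \<in> nilps R"
    using f(1) by blast
qed

end

lemma (in ring) nil_ideal_jacobson:
  assumes D: "D_regularly_nil_clean R"
  shows "nil_ideal R (jacobson R)"
  unfolding nil_ideal_def
proof
  fix a assume aJ: "a \<in> jacobson R"
  then have a: "a \<in> carrier R" unfolding jacobson_def by blast
  then obtain r where r: "r \<in> carrier R" and idem: "a \<otimes> r \<otimes> a \<in> idems R"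
    and nil: "a \<otimes> (\<one> \<ominus> a \<otimes> r \<otimes> a) \<in> nilps R"
    using D unfolding D_regularly_nil_clean_def by blast
  have "a \<otimes> r \<otimes> a \<in> jacobson R"
    using ideal.I_l_closed[OF ideal_jacobson aJ, of "a \<otimes> r"] a r by simp
  then have "a \<otimes> r \<otimes> a = \<zero>"
    using idem idempotent_in_jacobson_eq_zero unfolding idems_def by blast
  then show "a \<in> nilps R" using nil a by (simp add: minus_eq)
qed

theorem lemma2p1:
  fixes R (structure)
  assumes "ring R" and "\<one>\<^bsub>R\<^esub> \<noteq> \<zero>\<^bsub>R\<^esub>"
  shows "D_regularly_nil_clean R \<longleftrightarrow>
           D_regularly_nil_clean (R Quot (jacobson R)) \<and> nil_ideal R (jacobson R)"
proof -
  interpret ring R by fact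
  interpret J: ideal "jacobson R" R by (rule ideal_jacobson)
  show ?thesis
    using J.D_regularly_nil_clean_quotient J.D_regularly_nil_clean_lift nil_ideal_jacobson
    unfolding nil_ideal_def by blast
qed

end
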